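(* Let $\Omega$ be a measurable space with reference measure $\mathrm{d}\mathbf{y}$, let $q$ be a probability density on $\Omega$, and let $f_{\bm{\theta}}:\Omega\to\mathbb{R}$ for $\bm{\theta}\in\Theta$. Fix $\bm{\theta}\in\Theta$, $\nu\in\mathbb{R}$ and data $\mathcal{S}=\{\mathbf{y}_1,\ldots,\mathbf{y}_n\}\subset\Omega$, and assume $f_{\bm{\theta}}(\mathbf{y})-\log q(\mathbf{y})\le C(\bm{\theta})$ for all $\mathbf{y}\in\Omega$, for some constant $C(\bm{\theta})$. Let $\bm{r}_1,\bm{r}_2,\ldots$ be IID with density $q$, and define $$\mathcal{R}^m(\bm{\theta},\nu)=\sum_{i=1}^n\log\left[\frac{n\exp\{f_{\bm{\theta}}(\mathbf{y}_i)+\nu\}}{n\exp\{f_{\bm{\theta}}(\mathbf{y}_i)+\nu\}+mq(\mathbf{y}_i)}\right]+\sum_{j=1}^m\log\left[\frac{mq(\bm{r}_j)}{n\exp\{f_{\bm{\theta}}(\bm{r}_j)+\nu\}+mq(\bm{r}_j)}\right],$$ $$\mathcal{M}(\bm{\theta},\nu)=\sum_{i=1}^n\{f_{\bm{\theta}}(\mathbf{y}_i)+\nu\}-n\int_\Omega\exp\{f_{\bm{\theta}}(\mathbf{y})+\nu\}\,\mathrm{d}\mathbf{y}.$$ Then $$\mathcal{R}^m(\bm{\theta},\nu)+n\log(m/n)+\sum_{i=1}^n\log q(\mathbf{y}_i)\to\mathcal{M}(\bm{\theta},\nu)$$ almost surely as $m\to+\infty$, with respect to the randomness of the reference points $\b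m{r}_1,\ldots,\bm{r}_m$.
   Context: $\mathcal{R}^m$ is the log-likelihood of the logistic regression (noise-contrastive divergence) that classifies the data points (label 1) against the $m$ reference points (label 0) with log-odds $f_{\bm{\theta}}(\mathbf{u})+\nu-\log q(\mathbf{u})+\log(n/m)$. *)

theory Defs
  imports "HOL-Probability.Probability"
begin

definition nce_R :: "('a \<Rightarrow> real) \<Rightarrow> ('a \<Rightarrow> real) \<Rightarrow> real \<Rightarrow> nat \<Rightarrow> (nat \<Rightarrow> 'a) \<Rightarrow> nat \<Rightarrow> (nat \<Rightarrow> 'a) \<Rightarrow> real" where
  "nce_R f q \<nu> n y m r =
     (\<Sum>i<n. ln (real n * exp (f (y i) + \<nu>) / (real n * exp (f (y i) + \<nu>) + real m * q (y i))))
   + (\<Sum>j<m. ln (real m * q (r j) / (real n * exp (f (r j) + \<nu>) + real m * q (r j))))"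

definition mle_M :: "'a measure \<Rightarrow> ('a \<Rightarrow> real) \<Rightarrow> real \<Rightarrow> nat \<Rightarrow> (nat \<Rightarrow> 'a) \<Rightarrow> real" where
  "mle_M M f \<nu> n y =
     (\<Sum>i<n. f (y i) + \<nu>) - real n * (\<integral>x. exp (f x + \<nu>) \<partial>M)"

end

theory Submission
  imports Defs "HOL-Real_Asymp.Real_Asymp"
begin

text \<open>
  Write \<open>g = exp (f\<^sub>\<theta> + \<nu>) / q\<close>; the bound on \<open>f\<^sub>\<theta> - ln q\<close> makes \<open>g\<close> bounded.
  After adding \<open>n ln (m/n) + \<Sum> ln q(y\<^sub>i)\<close>, the data part of \<open>\<R>\<^sup>m\<close> becomes
  \<open>\<Sum>\<^sub>i (f\<^sub>\<theta>(y\<^sub>i) + \<nu>) - \<Sum>\<^sub>i ln (1 + n g(y\<^sub>i)/m)\<close>, whose second sum vanishes as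
  \<open>m \<rightarrow> \<infinity>\<close>, and the reference part becomes \<open>-\<Sum>\<^sub>j<\<^sub>m ln (1 + n g(r\<^sub>j)/m)\<close>.
  Since \<open>ln (1 + x) = x + O(x\<^sup>2)\<close> and \<open>g\<close> is bounded, the latter differs by \<open>O(1/m)\<close>
  from \<open>n\<close> times the empirical mean of \<open>g(r\<^sub>j)\<close>, which by the strong law of large
  numbers (here via Hoeffding's inequality and Borel--Cantelli) tends almost surely to
  \<open>E g(r\<^sub>1) = \<integral> exp (f\<^sub>\<theta> + \<nu>)\<close>.
\<close>

lemma tendsto_of_eventually_dist_less_inverse_Suc:
  fixes s :: "'b \<Rightarrow> 'c::metric_space"
  assumes "\<And>k::nat. eventually (\<lambda>m. dist (s m) l < 1 / Suc k) F"
  shows "(s \<longlongrightarrow> l) F"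
  unfolding tendsto_iff
proof (intro allI impI)
  fix e :: real assume "e > 0"
  then obtain k :: nat where "1 / Suc k < e" by (metis nat_approx_posE)
  with assms[of k] show "eventually (\<lambda>m. dist (s m) l < e) F"
    by (auto elim: eventually_mono)
qed

context prob_space
begin

lemma prob_sum_deviation_le_geometric:
  fixes X :: "nat \<Rightarrow> 'a \<Rightarrow> real"
  assumes indep: "indep_vars (\<lambda>_. borel) X UNIV"
    and bounded: "\<And>j \<omega>. \<omega> \<in> space M \<Longrightarrow> X j \<omega> \<in> {a..b}" and "a < b"
    and expectation: "\<And>j. expectation (X j) = \<mu>"
    and "\<epsilon> > 0"
  shows "prob {\<omega>\<in>space M. \<bar>(\<Sum>j<m. X j \<omega>) - real m * \<mu>\<bar> \<ge> real m * \<epsilon>}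
           \<le> 2 * exp (-2 * \<epsilon>\<^sup>2 / (b - a)\<^sup>2) ^ m"
proof (cases "m = 0")
  case True
  then show ?thesis by (simp add: prob_space)
next
  case False
  interpret Hoeffding_ineq M "{..<m}" X "\<lambda>_. a" "\<lambda>_. b" "real m * \<mu>"
  proof unfold_locales
    show "indep_vars (\<lambda>_. borel) X {..<m}"
      by (rule indep_vars_subset[OF indep]) auto
    show "AE \<omega> in M. X j \<omega> \<in> {a..b}" for j
      using bounded by (intro AE_I2) auto
    show "real m * \<mu> \<equiv> \<Sum>j<m. expectation (X j)"
      by (simp add: expectation)
  qed (use \<open>a < b\<close> in auto)
  have "prob {\<omega>\<in>space M. \<bar>(\<Sum>j<m. X j \<omega>) - real m * \<mu>\<bar> \<ge> real m * \<epsilon>}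
          \<le> 2 * exp (-2 * (real m * \<epsilon>)\<^sup>2 / (\<Sum>j<m. (b - a)\<^sup>2))"
    using False \<open>a < b\<close> \<open>\<epsilon> > 0\<close> by (intro Hoeffding_ineq_abs_ge) auto
  also have "-2 * (real m * \<epsilon>)\<^sup>2 / (\<Sum>j<m. (b - a)\<^sup>2) = real m * (-2 * \<epsilon>\<^sup>2 / (b - a)\<^sup>2)"
    using False by (simp add: power_mult_distrib power2_eq_square)
  finally show ?thesis
    by (simp only: exp_of_nat_mult)
qed

lemma AE_tendsto_mean_of_bounded_indep:
  fixes X :: "nat \<Rightarrow> 'a \<Rightarrow> real"
  assumes indep: "indep_vars (\<lambda>_. borel) X UNIV"
    and bounded: "\<And>j \<omega>. \<omega> \<in> space M \<Longrightarrow> X j \<omega> \<in> {a..b}" and "a < b"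
    and expectation: "\<And>j. expectation (X j) = \<mu>"
  shows "AE \<omega> in M. (\<lambda>m. (\<Sum>j<m. X j \<omega>) / real m) \<longlonglongrightarrow> \<mu>"
proof -
  have [measurable]: "X j \<in> borel_measurable M" for j
    using indep unfolding indep_vars_def by blast
  define bad where
    "bad \<epsilon> m = {\<omega>\<in>space M. \<bar>(\<Sum>j<m. X j \<omega>) - real m * \<mu>\<bar> \<ge> real m * \<epsilon>}" for \<epsilon> m
  have eventually_good: "AE \<omega> in M. eventually (\<lambda>m. \<omega> \<in> space M - bad \<epsilon> m) sequentially"
    if "\<epsilon> > 0" for \<epsilon>
  proof (rule borel_cantelli_AE1)
    show "bad \<epsilon> m \<in> sets M" for m
      unfolding bad_def by measurable
    show "emeasure M (bad \<epsilon> m) < \<infinity>" for m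
      by (simp add: less_top[symmetric])
    have "summable (\<lambda>m. 2 * exp (-2 * \<epsilon>\<^sup>2 / (b - a)\<^sup>2) ^ m)"
      using \<open>\<epsilon> > 0\<close> \<open>a < b\<close> by (intro summable_mult summable_geometric) simp
    then show "summable (\<lambda>m. measure M (bad \<epsilon> m))"
      by (rule summable_comparison_test[rotated])
        (use prob_sum_deviation_le_geometric[OF assms \<open>\<epsilon> > 0\<close>] in \<open>auto simp: bad_def\<close>)
  qed
  have "AE \<omega> in M. \<forall>k::nat. eventually (\<lambda>m. \<omega> \<in> space M - bad (1 / Suc k) m) sequentially"
    by (subst AE_all_countable) (intro allI eventually_good, simp)
  then show ?thesis
  proof (rule AE_mp, intro AE_I2 impI tendsto_of_eventually_dist_less_inverse_Suc)
    fix \<omega> k assume "\<forall>k::nat. eventually (\<lambda>m. \<omega> \<in> space M - bad (1 / Suc k) m) sequentially"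
    then have "eventually (\<lambda>m. \<omega> \<in> space M - bad (1 / Suc k) m) sequentially"
      by blast
    then show "eventually (\<lambda>m. dist ((\<Sum>j<m. X j \<omega>) / real m) \<mu> < 1 / Suc k) sequentially"
      using eventually_gt_at_top[of 0]
    proof eventually_elim
      case (elim m)
      then have "\<bar>(\<Sum>j<m. X j \<omega>) - real m * \<mu>\<bar> < real m * (1 / Suc k)"
        by (auto simp: bad_def)
      with elim show ?case
        by (simp add: dist_real_def field_simps abs_divide[symmetric] del: of_nat_Suc)
    qed
  qed
qed

end

lemma abs_ln_one_plus_minus_le_square:
  fixes x :: real
  assumes "0 \<le> x" "x \<le> 1"
  shows "\<bar>ln (1 + x) - x\<bar> \<le> x\<^sup>2"
  using ln_one_plus_pos_lower_bound[OF assms] ln_add_one_self_le_self[OF assms(1)] by linarith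

lemma tendsto_sum_ln_one_plus_div_of_mean:
  fixes G :: "nat \<Rightarrow> real"
  assumes G: "\<And>j. 0 \<le> G j" "\<And>j. G j \<le> K"
    and mean: "(\<lambda>m. (\<Sum>j<m. G j) / real m) \<longlonglongrightarrow> \<mu>"
  shows "(\<lambda>m. \<Sum>j<m. ln (1 + G j / real m)) \<longlonglongrightarrow> \<mu>"
proof -
  define D where "D m = (\<Sum>j<m. ln (1 + G j / real m) - G j / real m)" for m
  have "D \<longlonglongrightarrow> 0"
  proof (rule Lim_null_comparison)
    show "(\<lambda>m. K\<^sup>2 / real m) \<longlonglongrightarrow> 0" by real_asymp
    obtain N :: nat where N: "K \<le> real N" using real_arch_simple by blast
    show "eventually (\<lambda>m. norm (D m) \<le> K\<^sup>2 / real m) sequentially"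
      using eventually_ge_at_top[of "max 1 N"]
    proof eventually_elim
      case (elim m)
      then have m: "real m \<ge> 1" "K \<le> real m" using N by auto
      have small: "0 \<le> G j / real m" "G j / real m \<le> K / real m" "G j / real m \<le> 1" for j
        using G[of j] m by (auto intro: divide_right_mono)
      have "norm (D m) \<le> (\<Sum>j<m. \<bar>ln (1 + G j / real m) - G j / real m\<bar>)"
        unfolding D_def by (simp add: sum_abs)
      also have "\<dots> \<le> (\<Sum>j<m. (K / real m)\<^sup>2)"
      proof (intro sum_mono order_trans[OF abs_ln_one_plus_minus_le_square])
        show "(G j / real m)\<^sup>2 \<le> (K / real m)\<^sup>2" for j
          using small[of j] by (intro power_mono) auto
      qed (use small in auto)
      also have "\<dots> = K\<^sup>2 / real m"
        using m by (simp add: power2_eq_square)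
      finally show ?case .
    qed
  qed
  then have "(\<lambda>m. D m + (\<Sum>j<m. G j) / real m) \<longlonglongrightarrow> 0 + \<mu>"
    by (intro tendsto_add mean)
  then show ?thesis
    by (simp add: D_def sum_subtractf sum_divide_distrib)
qed

lemma ln_nce_data_term:
  fixes e q m n :: real
  assumes "e > 0" "q > 0" "m > 0" "n > 0"
  shows "ln (n * e / (n * e + m * q)) + ln (m / n) + ln q = ln e - ln (1 + n * (e / q) / m)"
proof -
  have "1 + n * (e / q) / m = (n * e + m * q) / (m * q)"
    using assms by (simp add: field_simps)
  moreover have "n * e + m * q > 0"
    using assms by (simp add: add_pos_pos)
  ultimately show ?thesis
    using assms by (simp add: ln_div ln_mult)
qed

lemma ln_nce_reference_term:
  fixes e q m n :: real
  assumes "e \<ge> 0" "q > 0" "m > 0" "n \<ge> 0"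
  shows "ln (m * q / (n * e + m * q)) = - ln (1 + n * (e / q) / m)"
proof -
  have "1 + n * (e / q) / m = (n * e + m * q) / (m * q)"
    using assms by (simp add: field_simps)
  with assms show ?thesis
    by (simp add: ln_div ln_mult add_nonneg_pos)
qed

lemma nce_R_shifted_eq:
  fixes f q :: "'a \<Rightarrow> real" and \<nu> :: real
  assumes q_data: "\<And>i. i < n \<Longrightarrow> q (y i) > 0" and q_ref: "\<And>j. q (r j) > 0" and "m > 0"
  defines "g \<equiv> \<lambda>x. exp (f x + \<nu>) / q x"
  shows "nce_R f q \<nu> n y m r + real n * ln (real m / real n) + (\<Sum>i<n. ln (q (y i)))
       = (\<Sum>i<n. f (y i) + \<nu>) - (\<Sum>i<n. ln (1 + real n * g (y i) / real m))
         - (\<Sum>j<m. ln (1 + real n * g (r j) / real m))"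
proof -
  have "nce_R f q \<nu> n y m r + real n * ln (real m / real n) + (\<Sum>i<n. ln (q (y i)))
      = (\<Sum>i<n. ln (real n * exp (f (y i) + \<nu>) / (real n * exp (f (y i) + \<nu>) + real m * q (y i)))
                + ln (real m / real n) + ln (q (y i)))
        + (\<Sum>j<m. ln (real m * q (r j) / (real n * exp (f (r j) + \<nu>) + real m * q (r j))))"
    by (simp add: nce_R_def sum.distrib)
  also have "\<dots> = (\<Sum>i<n. (f (y i) + \<nu>) - ln (1 + real n * g (y i) / real m))
                 + (\<Sum>j<m. - ln (1 + real n * g (r j) / real m))"
    unfolding g_def using q_data q_ref \<open>m > 0\<close>
    by (intro arg_cong2[where f = "(+)"] sum.cong refl)
       (simp_all add: ln_nce_data_term ln_nce_reference_term)
  finally show ?thesis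
    by (simp add: sum_subtractf sum_negf)
qed

lemma nce_R_shifted_tendsto:
  assumes q_data: "\<And>i. i < n \<Longrightarrow> q (y i) > 0" and q_ref: "\<And>j. q (r j) > 0"
    and g_bounded: "\<And>j. exp (f (r j) + \<nu>) / q (r j) \<le> K"
    and mean: "(\<lambda>m. (\<Sum>j<m. exp (f (r j) + \<nu>) / q (r j)) / real m) \<longlonglongrightarrow> \<mu>"
  shows "(\<lambda>m. nce_R f q \<nu> n y m r + real n * ln (real m / real n) + (\<Sum>i<n. ln (q (y i))))
           \<longlonglongrightarrow> (\<Sum>i<n. f (y i) + \<nu>) - real n * \<mu>"
proof -
  define g where "g x = exp (f x + \<nu>) / q x" for x
  have data_vanishes: "(\<lambda>m. \<Sum>i<n. ln (1 + real n * g (y i) / real m)) \<longlonglongrightarrow> (\<Sum>i<n. 0)"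
    by (intro tendsto_sum) real_asymp
  have scaled_mean: "(\<lambda>m. (\<Sum>j<m. real n * g (r j)) / real m) \<longlonglongrightarrow> real n * \<mu>"
    using tendsto_mult_left[OF mean, of "real n"]
    by (simp add: g_def sum_distrib_left)
  have reference: "(\<lambda>m. \<Sum>j<m. ln (1 + real n * g (r j) / real m)) \<longlonglongrightarrow> real n * \<mu>"
  proof (rule tendsto_sum_ln_one_plus_div_of_mean)
    show "0 \<le> real n * g (r j)" for j
      using q_ref[of j] by (simp add: g_def)
    show "real n * g (r j) \<le> real n * K" for j
      using g_bounded[of j] by (intro mult_left_mono) (auto simp: g_def)
  qed (rule scaled_mean)
  have "(\<lambda>m. (\<Sum>i<n. f (y i) + \<nu>) - (\<Sum>i<n. ln (1 + real n * g (y i) / real m))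
              - (\<Sum>j<m. ln (1 + real n * g (r j) / real m)))
          \<longlonglongrightarrow> (\<Sum>i<n. f (y i) + \<nu>) - real n * \<mu>"
    using tendsto_diff[OF tendsto_diff[OF tendsto_const data_vanishes] reference] by simp
  then show ?thesis
    by (rule Lim_transform_eventually)
       (use eventually_gt_at_top[of 0] in
         \<open>eventually_elim,
          simp add: nce_R_shifted_eq[where q = q and y = y and r = r, OF q_data q_ref] g_def\<close>)
qed

theorem theorem3:
  fixes M :: "'a measure" and q :: "'a \<Rightarrow> real" and f :: "'t \<Rightarrow> 'a \<Rightarrow> real"
    and \<theta> :: 't and \<nu> :: real and n :: nat and y :: "nat \<Rightarrow> 'a"
    and P :: "'w measure" and r :: "nat \<Rightarrow> 'w \<Rightarrow> 'a" and C :: "'t \<Rightarrow> real"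
  assumes q_meas: "q \<in> borel_measurable M"
    and q_nonneg: "\<forall>x\<in>space M. q x \<ge> 0"
    and q_dens: "(\<integral>\<^sup>+ x. ennreal (q x) \<partial>M) = 1"
    and f_meas: "f \<theta> \<in> borel_measurable M"
    and q_pos: "\<forall>x\<in>space M. q x > 0"
    and bound: "\<forall>x\<in>space M. f \<theta> x - ln (q x) \<le> C \<theta>"
    and data: "\<forall>i<n. y i \<in> space M"
    and P: "prob_space P"
    and indep: "prob_space.indep_vars P (\<lambda>_. M) r UNIV"
    and distr: "\<forall>j. distributed P M (r j) (\<lambda>x. ennreal (q x))"
  shows "AE \<omega> in P.
     (\<lambda>m. nce_R (f \<theta>) q \<nu> n y m (\<lambda>j. r j \<omega>) + real n * ln (real m / real n)
           + (\<Sum>i<n. ln (q (y i))))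
     \<longlonglongrightarrow> mle_M M (f \<theta>) \<nu> n y"
proof -
  interpret prob_space P by (rule P)
  define g where "g x = exp (f \<theta> x + \<nu>) / q x" for x
  define K where "K = exp (C \<theta> + \<nu>)"
  have g_bounded: "g x \<in> {0..K}" if "x \<in> space M" for x
  proof -
    have "q x > 0"
      using q_pos that by blast
    have "exp (f \<theta> x + \<nu>) \<le> exp (C \<theta> + ln (q x) + \<nu>)"
      using bound that by auto
    also have "\<dots> = K * q x"
      using \<open>q x > 0\<close> by (simp add: K_def exp_add)
    finally show ?thesis
      using \<open>q x > 0\<close> by (simp add: g_def divide_le_eq)
  qed
  have [measurable]: "g \<in> borel_measurable M"
    unfolding g_def using q_meas f_meas by measurable
  have r_meas [measurable]: "r j \<in> P \<rightarrow>\<^sub>M M" for j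
    using distr distributed_measurable by blast
  have expectation: "expectation (\<lambda>\<omega>. g (r j \<omega>)) = (\<integral>x. exp (f \<theta> x + \<nu>) \<partial>M)" for j
  proof -
    have "expectation (\<lambda>\<omega>. g (r j \<omega>)) = (\<integral>x. q x * g x \<partial>M)"
      using distr q_nonneg by (intro distributed_integral[symmetric]) auto
    also have "\<dots> = (\<integral>x. exp (f \<theta> x + \<nu>) \<partial>M)"
      using q_pos by (intro Bochner_Integration.integral_cong) (auto simp: g_def)
    finally show ?thesis .
  qed
  have "AE \<omega> in P. (\<lambda>m. (\<Sum>j<m. g (r j \<omega>)) / real m) \<longlonglongrightarrow> (\<integral>x. exp (f \<theta> x + \<nu>) \<partial>M)"
    using g_bounded measurable_space[OF r_meas] exp_gt_zero[of "C \<theta> + \<nu>"]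
    by (intro AE_tendsto_mean_of_bounded_indep[where a = 0 and b = K] expectation
        indep_vars_compose2[OF indep]) (auto simp: K_def)
  then show ?thesis
  proof (rule AE_mp, intro AE_I2 impI)
    fix \<omega> assume "\<omega> \<in> space P"
    then have r_in: "r j \<omega> \<in> space M" for j
      using measurable_space[OF r_meas] by blast
    assume "(\<lambda>m. (\<Sum>j<m. g (r j \<omega>)) / real m) \<longlonglongrightarrow> (\<integral>x. exp (f \<theta> x + \<nu>) \<partial>M)"
    then show "(\<lambda>m. nce_R (f \<theta>) q \<nu> n y m (\<lambda>j. r j \<omega>) + real n * ln (real m / real n)
                   + (\<Sum>i<n. ln (q (y i)))) \<longlonglongrightarrow> mle_M M (f \<theta>) \<nu> n y"
      unfolding mle_M_def using q_pos data r_in g_bounded[OF r_in]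
      by (intro nce_R_shifted_tendsto[where K = K]) (auto simp: g_def)
  qed
qed

end
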